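(* For integers $n \geq 2$, let $L_n(x) = \left\lfloor \frac{x(2^n - x)}{2^{n-2}} \right\rfloor$ for $x \in X_n = \{1, 2, \dots, 2^n - 1\}$, and call $n$ undesirable if there exists $x \in X_n$ with $L_n(x) = 2^{n-1}$. Then an integer $n \geq 2$ is undesirable if there exists an integer $m$ with $2^{n-2}\sqrt{2} - \sqrt{2}/4 \leq m \leq 2^{n-2}\sqrt{2}$. *)

theory Defs
  imports Complex_Main
begin

definition L :: "nat \<Rightarrow> int \<Rightarrow> int" where
  "L n x = \<lfloor>(real_of_int x * (2 ^ n - real_of_int x)) / 2 ^ (n - 2)\<rfloor>"

definition X :: "nat \<Rightarrow> int set" where
  "X n = {1 .. 2 ^ n - 1}"

definition undesirable :: "nat \<Rightarrow> bool" where
  "undesirable n \<longleftrightarrow> (\<exists>x \<in> X n. L n x = 2 ^ (n - 1))"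

end

theory Submission
  imports Defs
begin

text \<open>Write \<open>k = 2^(n-2)\<close>, so \<open>2^n = 4k\<close>. For \<open>x = 2k - m\<close> the numerator
  \<open>x (4k - x)\<close> equals \<open>4k\<^sup>2 - m\<^sup>2\<close>, hence \<open>L\<^sub>n(x) = 2k = 2^(n-1)\<close> exactly when
  \<open>0 \<le> 2k\<^sup>2 - m\<^sup>2 < k\<close>. Squaring the hypothesis \<open>(k - 1/4)\<surd>2 \<le> m \<le> k\<surd>2\<close> gives
  \<open>2k\<^sup>2 - k + 1/8 \<le> m\<^sup>2 \<le> 2k\<^sup>2\<close>, which is this window.\<close>

lemma L_eq_div: "L n x = x * (2 ^ n - x) div 2 ^ (n - 2)"
proof -
  have "real_of_int x * (2 ^ n - real_of_int x) / 2 ^ (n - 2)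
      = real_of_int (x * (2 ^ n - x)) / real_of_int (2 ^ (n - 2))"
    by simp
  then show ?thesis
    unfolding L_def by (simp only: floor_divide_of_int_eq)
qed

lemma sqrt2_window_square_bounds:
  fixes k m :: real
  assumes "1 / 4 \<le> k"
    and lower: "(k - 1 / 4) * sqrt 2 \<le> m"
    and upper: "m \<le> k * sqrt 2"
  shows "2 * k\<^sup>2 - k + 1 / 8 \<le> m\<^sup>2" and "m\<^sup>2 \<le> 2 * k\<^sup>2"
proof -
  have lower_nonneg: "0 \<le> (k - 1 / 4) * sqrt 2"
    using assms(1) by simp
  have "((k - 1 / 4) * sqrt 2)\<^sup>2 \<le> m\<^sup>2"
    using lower lower_nonneg by (intro power_mono) auto
  then show "2 * k\<^sup>2 - k + 1 / 8 \<le> m\<^sup>2"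
    by (simp add: power_mult_distrib algebra_simps power2_eq_square)
  have "m\<^sup>2 \<le> (k * sqrt 2)\<^sup>2"
    using upper lower lower_nonneg by (intro power_mono) auto
  then show "m\<^sup>2 \<le> 2 * k\<^sup>2"
    by (simp add: power_mult_distrib)
qed

lemma complement_product_div_eq:
  fixes k m :: int
  assumes "0 < k"
    and "2 * k\<^sup>2 - k < m\<^sup>2" "m\<^sup>2 \<le> 2 * k\<^sup>2"
  shows "(2 * k - m) * (4 * k - (2 * k - m)) div k = 2 * k"
proof -
  have "(2 * k - m) * (4 * k - (2 * k - m)) = 2 * k * k + (2 * k\<^sup>2 - m\<^sup>2)"
    by (simp add: algebra_simps power2_eq_square)
  moreover have "(2 * k\<^sup>2 - m\<^sup>2) div k = 0"
    using assms by (intro div_pos_pos_trivial) auto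
  ultimately show ?thesis
    using assms(1) by simp
qed

lemma undesirable_if_square_in_window:
  fixes m :: int
  assumes "n \<ge> 2"
    and "0 \<le> m"
    and "2 * (2 ^ (n - 2))\<^sup>2 - 2 ^ (n - 2) < m\<^sup>2" "m\<^sup>2 \<le> 2 * (2 ^ (n - 2))\<^sup>2"
  shows "undesirable n"
proof -
  define k :: int where "k = 2 ^ (n - 2)"
  have k_pos: "0 < k"
    unfolding k_def by simp
  have two_pow_n: "(2::int) ^ n = 4 * k" and two_pow_pred: "(2::int) ^ (n - 1) = 2 * k"
    using assms(1) by (auto simp: k_def le_iff_add power_add)
  have bounds: "2 * k\<^sup>2 - k < m\<^sup>2" "m\<^sup>2 \<le> 2 * k\<^sup>2"
    using assms(3,4) by (simp_all add: k_def)
  have "m < 2 * k"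
  proof (rule ccontr)
    assume "\<not> m < 2 * k"
    then have "(2 * k)\<^sup>2 \<le> m\<^sup>2"
      using k_pos by (intro power_mono) auto
    moreover have "0 < k\<^sup>2"
      using k_pos by simp
    ultimately show False
      using bounds(2) by (simp add: power_mult_distrib)
  qed
  then have "2 * k - m \<in> X n"
    using assms(2) by (simp add: X_def two_pow_n)
  moreover have "L n (2 * k - m) = 2 ^ (n - 1)"
    unfolding L_eq_div two_pow_n two_pow_pred k_def[symmetric]
    using complement_product_div_eq[OF k_pos bounds] .
  ultimately show ?thesis
    unfolding undesirable_def by blast
qed

theorem lemma2p2:
  fixes n :: nat
  assumes "n \<ge> 2"
    and "\<exists>m :: int. 2 ^ (n - 2) * sqrt 2 - sqrt 2 / 4 \<le> real_of_int m
                   \<and> real_of_int m \<le> 2 ^ (n - 2) * sqrt 2"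
  shows "undesirable n"
proof -
  define k :: real where "k = 2 ^ (n - 2)"
  obtain m :: int where lower: "(k - 1 / 4) * sqrt 2 \<le> m" and upper: "m \<le> k * sqrt 2"
    using assms(2) by (auto simp: k_def algebra_simps)
  have "1 \<le> k"
    unfolding k_def by simp
  then have squares: "2 * k\<^sup>2 - k + 1 / 8 \<le> m\<^sup>2" "m\<^sup>2 \<le> 2 * k\<^sup>2"
    using sqrt2_window_square_bounds lower upper by simp_all
  have "0 \<le> (k - 1 / 4) * sqrt 2"
    using \<open>1 \<le> k\<close> by simp
  then have "0 \<le> m"
    using lower by linarith
  have "real_of_int (2 * (2 ^ (n - 2))\<^sup>2 - 2 ^ (n - 2)) < real_of_int (m\<^sup>2)"
    using squares(1) by (simp add: k_def)
  moreover have "real_of_int (m\<^sup>2) \<le> real_of_int (2 * (2 ^ (n - 2))\<^sup>2)"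
    using squares(2) by (simp add: k_def)
  ultimately show ?thesis
    using undesirable_if_square_in_window[OF assms(1) \<open>0 \<le> m\<close>]
    by (simp only: of_int_less_iff of_int_le_iff)
qed

end
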